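(* Let $F$ be a minimally unsatisfiable clause-set with $\mathrm{singind}(F)=1$. 1. If $F$ has at least two singular variables, then: (a) every singular variable of $F$ is non-1-singular; (b) there is a clause $C\in F$ containing every singular literal of $F$; (c) if $F$ is eventually saturated, then $F$ has exactly two singular variables. 2. If $F$ is eventually saturated, then any two elements of $\mathrm{sDP}(F)$ are isomorphic.
   Context: Literals are variables $v$ and complements $\overline{v}$; a clause is a finite set of literals with no complementary pair; a clause-set is a finite set of clauses; $\mathrm{var}(F)$ is the set of variables of $F$; $\mathrm{ldeg}_F(x)$ is the number of clauses of $F$ containing literal $x$. $\mathrm{DP}_v(F) := \{C \in F : v \notin \mathrm{var}(C)\} \cup \{(C \cup D)\setminus\{v,\overline{v}\} : C, D \in F,\ C \cap \overline{D} = \{v\}\}$; $\mathrm{DP}_{v_1,\dots,v_k}(F)$ applies these in order. A variable $v$ is singular for $F$ if $\min(\mathrm{ldeg}_F(v),\mathrm{ldeg}_F(\overline{v}))=1$; 1-singular if $\mathrm{ldeg}_F(v)=\mathrm{ldeg}_F(\overline{v})=1$; non-1-singular if singular but not 1-singular; a singular literal is a literal $x$ of a singular variable with $\mathrm{ldeg}_F(x)=1$; $F$ is nonsingular if it has no singular variables. For minimally unsatisfiable $F$, a tuple $(v_1,\dots,v_n)$ is singular if each $v_i$ is singular for $\mathrm{DP}_{v_1,\dots,v_{i-1}}(F)$, and maximal if $\mathrm{DP}_{v_1,\dots,v_n}(F)$ is nonsingular; $\mathrm{singind}(F)$ is the minimal length of a maximal singular tuple. $\mathrm{sDP}(F)$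 is the set of nonsingular minimally unsatisfiable clause-sets obtainable from $F$ by zero or more steps $G\leadsto\mathrm{DP}_v(G)$ with $v$ singular for $G$. A minimally unsatisfiable $G$ is saturated if for every $C\in G$ and literal $y$ with $\mathrm{var}(y)\in\mathrm{var}(G)\setminus\mathrm{var}(C)$, $(G\setminus\{C\})\cup\{C\cup\{y\}\}$ is satisfiable; $F$ is eventually saturated if every element of $\mathrm{sDP}(F)$ is saturated. Clause-sets are isomorphic if a complement-preserving bijection on literals maps the clauses of one exactly onto the clauses of the other. *)

theory Defs
  imports Main
begin

datatype 'v lit = Pos 'v | Neg 'v

fun comp :: "'v lit \<Rightarrow> 'v lit" where
  "comp (Pos v) = Neg v" | "comp (Neg v) = Pos v"

fun lvar :: "'v lit \<Rightarrow> 'v" where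
  "lvar (Pos v) = v" | "lvar (Neg v) = v"

type_synonym 'v clause = "'v lit set"
type_synonym 'v cls = "'v clause set"

definition is_clause :: "'v clause \<Rightarrow> bool" where
  "is_clause C \<longleftrightarrow> finite C \<and> (\<forall>x\<in>C. comp x \<notin> C)"

definition is_clause_set :: "'v cls \<Rightarrow> bool" where
  "is_clause_set F \<longleftrightarrow> finite F \<and> (\<forall>C\<in>F. is_clause C)"

definition var_cl :: "'v clause \<Rightarrow> 'v set" where
  "var_cl C = lvar ` C"

definition vars :: "'v cls \<Rightarrow> 'v set" where
  "vars F = (\<Union>C\<in>F. var_cl C)"

definition ldeg :: "'v cls \<Rightarrow> 'v lit \<Rightarrow> nat" where
  "ldeg F x = card {C\<in>F. x \<in> C}"

fun lit_val :: "('v \<Rightarrow> bool) \<Rightarrow> 'v lit \<Rightarrow> bool" where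
  "lit_val \<phi> (Pos v) = \<phi> v" | "lit_val \<phi> (Neg v) = (\<not> \<phi> v)"

definition satisfiable :: "'v cls \<Rightarrow> bool" where
  "satisfiable F \<longleftrightarrow> (\<exists>\<phi>. \<forall>C\<in>F. \<exists>x\<in>C. lit_val \<phi> x)"

definition MU :: "'v cls \<Rightarrow> bool" where
  "MU F \<longleftrightarrow> is_clause_set F \<and> \<not> satisfiable F \<and> (\<forall>C\<in>F. satisfiable (F - {C}))"

definition DP :: "'v \<Rightarrow> 'v cls \<Rightarrow> 'v cls" where
  "DP v F = {C\<in>F. v \<notin> var_cl C} \<union>
     {(C \<union> D) - {Pos v, Neg v} | C D. C \<in> F \<and> D \<in> F \<and> C \<inter> comp ` D = {Pos v}}"

definition DPs :: "'v list \<Rightarrow> 'v cls \<Rightarrow> 'v cls" where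
  "DPs vs F = foldl (\<lambda>G v. DP v G) F vs"

definition singular :: "'v cls \<Rightarrow> 'v \<Rightarrow> bool" where
  "singular F v \<longleftrightarrow> min (ldeg F (Pos v)) (ldeg F (Neg v)) = 1"

definition one_singular :: "'v cls \<Rightarrow> 'v \<Rightarrow> bool" where
  "one_singular F v \<longleftrightarrow> ldeg F (Pos v) = 1 \<and> ldeg F (Neg v) = 1"

definition non_one_singular :: "'v cls \<Rightarrow> 'v \<Rightarrow> bool" where
  "non_one_singular F v \<longleftrightarrow> singular F v \<and> \<not> one_singular F v"

definition singular_lit :: "'v cls \<Rightarrow> 'v lit \<Rightarrow> bool" where
  "singular_lit F x \<longleftrightarrow> singular F (lvar x) \<and> ldeg F x = 1"

definition singular_vars :: "'v cls \<Rightarrow> 'v set" where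
  "singular_vars F = {v. singular F v}"

definition nonsingular :: "'v cls \<Rightarrow> bool" where
  "nonsingular F \<longleftrightarrow> (\<forall>v. \<not> singular F v)"

fun singular_tuple :: "'v cls \<Rightarrow> 'v list \<Rightarrow> bool" where
  "singular_tuple F [] = True"
| "singular_tuple F (v # vs) = (singular F v \<and> singular_tuple (DP v F) vs)"

definition maximal_singular_tuple :: "'v cls \<Rightarrow> 'v list \<Rightarrow> bool" where
  "maximal_singular_tuple F vs \<longleftrightarrow> singular_tuple F vs \<and> nonsingular (DPs vs F)"

definition singind :: "'v cls \<Rightarrow> nat" where
  "singind F = (LEAST n. \<exists>vs. length vs = n \<and> maximal_singular_tuple F vs)"

inductive sdp_reach :: "'v cls \<Rightarrow> 'v cls \<Rightarrow> bool" where
  refl: "sdp_reach F F"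
| step: "sdp_reach F G \<Longrightarrow> singular G v \<Longrightarrow> sdp_reach F (DP v G)"

definition sDP :: "'v cls \<Rightarrow> 'v cls set" where
  "sDP F = {G. sdp_reach F G \<and> MU G \<and> nonsingular G}"

definition saturated :: "'v cls \<Rightarrow> bool" where
  "saturated G \<longleftrightarrow> MU G \<and>
     (\<forall>C\<in>G. \<forall>y. lvar y \<in> vars G - var_cl C \<longrightarrow> satisfiable ((G - {C}) \<union> {C \<union> {y}}))"

definition eventually_saturated :: "'v cls \<Rightarrow> bool" where
  "eventually_saturated F \<longleftrightarrow> (\<forall>G\<in>sDP F. saturated G)"

definition isomorphic :: "'v cls \<Rightarrow> 'w cls \<Rightarrow> bool" where
  "isomorphic F G \<longleftrightarrow> (\<exists>f :: 'v lit \<Rightarrow> 'w lit. bij f \<and> (\<forall>x. f (comp x) = comp (f x))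
      \<and> (\<lambda>C. f ` C) ` F = G)"

end

theory Submission
  imports Defs
begin

text \<open>Since \<open>singind F = 1\<close>, some singular variable \<open>v\<close> gives a nonsingular \<open>DP v F\<close>. Let \<open>s\<close>
  be its singular literal and \<open>C0\<close> the only clause containing \<open>s\<close>. A literal \<open>x\<close> of degree one
  stays of degree one in \<open>DP v F\<close> unless \<open>x \<in> C0\<close> and \<open>comp s\<close> occurs at least twice; hence every
  other singular literal lies in \<open>C0\<close>, and if there is one, \<open>v\<close> is not 1-singular. The singular
  literals in \<open>C0 - {s}\<close> occur in \<open>DP v F\<close> in exactly the resolvents on \<open>s\<close>, which saturation
  allows for at most one of them. If \<open>t \<in> C0\<close> is the singular literal of a second variable \<open>w\<close>,
  saturation of \<open>DP v F\<close> and of \<open>DP w F\<close> forces every clause containing \<open>comp t\<close> or \<open>comp s\<close> to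
  contain \<open>C0 - {s, t}\<close>; then the literal bijection \<open>s \<mapsto> comp t\<close>, \<open>t \<mapsto> comp s\<close> maps
  \<open>DP v F\<close> onto \<open>DP w F\<close>, and these are the only elements of \<open>sDP F\<close>.\<close>

lemma comp_comp [simp]: "comp (comp x) = x"
  by (cases x) auto

lemma comp_neq [simp]: "comp x \<noteq> x" "x \<noteq> comp x"
  by (cases x; simp)+

lemma lvar_comp [simp]: "lvar (comp x) = lvar x"
  by (cases x) auto

lemma comp_eq_comp_iff [simp]: "comp x = comp y \<longleftrightarrow> x = y"
  by (metis comp_comp)

lemma lvar_eq_lvarD: "lvar y = lvar x \<Longrightarrow> y = x \<or> y = comp x"
  by (cases x; cases y) auto

lemma lit_val_comp [simp]: "lit_val \<phi> (comp x) \<longleftrightarrow> \<not> lit_val \<phi> x"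
  by (cases x) auto

lemma mem_comp_image_iff: "x \<in> comp ` D \<longleftrightarrow> comp x \<in> D"
  by (metis comp_comp image_iff)

lemma comp_image_Int: "comp ` (A \<inter> comp ` B) = comp ` A \<inter> B"
  by (rule set_eqI) (simp add: mem_comp_image_iff)

lemma var_cl_iff: "v \<in> var_cl C \<longleftrightarrow> (\<exists>x\<in>C. lvar x = v)"
  by (auto simp: var_cl_def)

lemma lvar_in_var_cl: "x \<in> C \<Longrightarrow> lvar x \<in> var_cl C"
  by (auto simp: var_cl_def)

lemma lvar_notin_var_cl: "x \<notin> C \<Longrightarrow> comp x \<notin> C \<Longrightarrow> lvar x \<notin> var_cl C"
  by (auto simp: var_cl_iff dest: lvar_eq_lvarD)

lemma lvar_in_vars: "C \<in> G \<Longrightarrow> x \<in> C \<Longrightarrow> lvar x \<in> vars G"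
  by (auto simp: vars_def var_cl_def)

lemma mem_resolvent_iff: "x \<in> (A \<union> B) - {Pos v, Neg v} \<longleftrightarrow> (x \<in> A \<or> x \<in> B) \<and> lvar x \<noteq> v"
  by (cases x) auto

definition make_true :: "('v \<Rightarrow> bool) \<Rightarrow> 'v lit \<Rightarrow> 'v \<Rightarrow> bool" where
  "make_true \<phi> x = \<phi>(lvar x := lit_val (\<lambda>_. True) x)"

lemma lit_val_make_true:
  "lit_val (make_true \<phi> x) y \<longleftrightarrow> (if lvar y = lvar x then y = x else lit_val \<phi> y)"
  by (cases x; cases y) (auto simp: make_true_def)

lemma lit_val_make_true_self [simp]: "lit_val (make_true \<phi> x) x"
  by (simp add: lit_val_make_true)

lemma lit_val_make_true_other: "lvar y \<noteq> lvar x \<Longrightarrow> lit_val (make_true \<phi> x) y \<longleftrightarrow> lit_val \<phi> y"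
  by (simp add: lit_val_make_true)

lemma satisfiableI: "\<forall>C\<in>G. \<exists>x\<in>C. lit_val \<phi> x \<Longrightarrow> satisfiable G"
  unfolding satisfiable_def by blast

section \<open>Minimally unsatisfiable clause-sets\<close>

lemma MU_comp_notin: "MU F \<Longrightarrow> C \<in> F \<Longrightarrow> x \<in> C \<Longrightarrow> comp x \<notin> C"
  by (auto simp: MU_def is_clause_set_def is_clause_def)

lemma MU_finite: "MU F \<Longrightarrow> finite F"
  by (auto simp: MU_def is_clause_set_def)

lemma MU_finite_clause: "MU F \<Longrightarrow> C \<in> F \<Longrightarrow> finite C"
  by (auto simp: MU_def is_clause_set_def is_clause_def)

lemma MU_unsat: "MU F \<Longrightarrow> \<not> satisfiable F"
  by (auto simp: MU_def)

lemma finite_vars_MU: "MU F \<Longrightarrow> finite (vars F)"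
  unfolding vars_def var_cl_def by (auto dest: MU_finite MU_finite_clause)

lemma MU_falsifying_assignment:
  assumes "MU F" "C \<in> F"
  obtains \<phi> where "\<forall>D\<in>F. D \<noteq> C \<longrightarrow> (\<exists>x\<in>D. lit_val \<phi> x)" "\<forall>x\<in>C. \<not> lit_val \<phi> x"
proof -
  from assms obtain \<phi> where \<phi>: "\<forall>D\<in>F - {C}. \<exists>x\<in>D. lit_val \<phi> x"
    by (auto simp: MU_def satisfiable_def)
  moreover have "\<forall>x\<in>C. \<not> lit_val \<phi> x"
    using \<phi> satisfiableI[of F \<phi>] MU_unsat[OF assms(1)] by blast
  ultimately show thesis using that by blast
qed

lemma MU_comp_occurs:
  assumes mu: "MU F" and "C \<in> F" "x \<in> C"
  shows "\<exists>D\<in>F. comp x \<in> D"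
proof (rule ccontr)
  assume pure: "\<not> ?thesis"
  obtain \<phi> where \<phi>: "\<forall>D\<in>F. D \<noteq> C \<longrightarrow> (\<exists>y\<in>D. lit_val \<phi> y)"
    using MU_falsifying_assignment[OF mu \<open>C \<in> F\<close>] by blast
  have "\<exists>y\<in>D. lit_val (make_true \<phi> x) y" if "D \<in> F" for D
  proof (cases "D = C")
    case True
    then show ?thesis using \<open>x \<in> C\<close> lit_val_make_true_self by blast
  next
    case False
    then obtain y where "y \<in> D" "lit_val \<phi> y" using \<phi> \<open>D \<in> F\<close> by blast
    moreover have "y \<noteq> comp x" using pure \<open>D \<in> F\<close> \<open>y \<in> D\<close> by blast
    ultimately show ?thesis by (auto simp: lit_val_make_true dest: lvar_eq_lvarD)
  qed
  then show False using satisfiableI MU_unsat[OF mu] by blast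
qed

text \<open>A second clash \<open>z\<close> would make the assignment falsifying only \<open>D\<close>, with \<open>comp s\<close> made true,
  a model of \<open>F\<close>: \<open>C0\<close> stays satisfied by \<open>z\<close>.\<close>
lemma MU_unique_clash:
  assumes mu: "MU F" and C0: "{C\<in>F. s \<in> C} = {C0}" and D: "D \<in> F" "comp s \<in> D"
  shows "C0 \<inter> comp ` D = {s}"
proof
  show "{s} \<subseteq> C0 \<inter> comp ` D" using C0 D by (auto simp: mem_comp_image_iff)
next
  show "C0 \<inter> comp ` D \<subseteq> {s}"
  proof
    fix z assume z: "z \<in> C0 \<inter> comp ` D"
    show "z \<in> {s}"
    proof (rule ccontr)
      assume "z \<notin> {s}"
      obtain \<phi> where \<phi>: "\<forall>E\<in>F. E \<noteq> D \<longrightarrow> (\<exists>x\<in>E. lit_val \<phi> x)" and "\<forall>x\<in>D. \<not> lit_val \<phi> x"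
        using MU_falsifying_assignment[OF mu D(1)] by blast
      then have "lit_val \<phi> z" using z by (auto simp: mem_comp_image_iff)
      have "s \<notin> D" using MU_comp_notin[OF mu D] by simp
      then have "lvar z \<noteq> lvar s" using z \<open>z \<notin> {s}\<close> by (auto simp: mem_comp_image_iff dest: lvar_eq_lvarD)
      have "\<exists>y\<in>E. lit_val (make_true \<phi> (comp s)) y" if E: "E \<in> F" for E
      proof -
        consider "E = D" | "E = C0" | "E \<noteq> D" "E \<noteq> C0" by blast
        then show ?thesis
        proof cases
          case 1
          then show ?thesis using D(2) lit_val_make_true_self by blast
        next
          case 2
          have "lit_val (make_true \<phi> (comp s)) z"
            using \<open>lit_val \<phi> z\<close> \<open>lvar z \<noteq> lvar s\<close> by (simp add: lit_val_make_true_other)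
          then show ?thesis using z 2 by blast
        next
          case 3
          then obtain y where "y \<in> E" "lit_val \<phi> y" using \<phi> E by blast
          moreover have "y \<noteq> s" using C0 E 3 \<open>y \<in> E\<close> by blast
          ultimately show ?thesis by (auto simp: lit_val_make_true dest: lvar_eq_lvarD)
        qed
      qed
      then show False using satisfiableI MU_unsat[OF mu] by blast
    qed
  qed
qed

section \<open>Literal degrees and singular variables\<close>

lemma ldeg_pos_iff: "finite G \<Longrightarrow> 0 < ldeg G x \<longleftrightarrow> (\<exists>C\<in>G. x \<in> C)"
  by (auto simp: ldeg_def card_gt_0_iff)

lemma ldeg_le_1: "{C\<in>G. x \<in> C} \<subseteq> {C0} \<Longrightarrow> ldeg G x \<le> 1"
  unfolding ldeg_def using card_mono[of "{C0}"] by fastforce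

lemma ldeg_eq_1E:
  assumes "ldeg G x = 1"
  obtains C0 where "{C\<in>G. x \<in> C} = {C0}"
proof -
  have "card {C\<in>G. x \<in> C} = 1" using assms by (simp add: ldeg_def)
  then show thesis using that by (rule card_1_singletonE)
qed

lemma singular_lvar_iff: "singular G (lvar x) \<longleftrightarrow> min (ldeg G x) (ldeg G (comp x)) = 1"
  by (cases x) (auto simp: singular_def min.commute)

lemma one_singular_lvar_iff: "one_singular G (lvar x) \<longleftrightarrow> ldeg G x = 1 \<and> ldeg G (comp x) = 1"
  by (cases x) (auto simp: one_singular_def)

lemma singularE:
  assumes "singular G v"
  obtains s where "lvar s = v" "ldeg G s = 1"
proof -
  have "ldeg G (Pos v) = 1 \<or> ldeg G (Neg v) = 1"
    using assms by (auto simp: singular_def min_def split: if_splits)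
  then show thesis
  proof
    assume "ldeg G (Pos v) = 1"
    then show thesis using that[of "Pos v"] by simp
  next
    assume "ldeg G (Neg v) = 1"
    then show thesis using that[of "Neg v"] by simp
  qed
qed

lemma singular_in_vars:
  assumes "singular G v"
  shows "v \<in> vars G"
proof -
  obtain s where s: "lvar s = v" "ldeg G s = 1" using singularE[OF assms] .
  from s(2) obtain C0 where "{C\<in>G. s \<in> C} = {C0}" by (rule ldeg_eq_1E)
  then show ?thesis using s(1) lvar_in_vars by blast
qed

lemma vars_DP_subset: "vars (DP v F) \<subseteq> vars F - {v}"
proof
  fix u assume "u \<in> vars (DP v F)"
  then obtain E x where E: "E \<in> DP v F" "x \<in> E" "lvar x = u"
    unfolding vars_def var_cl_def by blast
  from E(1) consider "E \<in> F" "v \<notin> var_cl E"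
    | C D where "E = (C \<union> D) - {Pos v, Neg v}" "C \<in> F" "D \<in> F"
    unfolding DP_def by blast
  then show "u \<in> vars F - {v}"
  proof cases
    case 1
    then show ?thesis using E(3) lvar_in_vars[OF 1(1) E(2)] lvar_in_var_cl[OF E(2)] by auto
  next
    case 2
    then have "x \<in> C \<or> x \<in> D" "u \<noteq> v" using E(2,3) unfolding 2(1) mem_resolvent_iff by auto
    then show ?thesis using 2(2,3) E(3) lvar_in_vars by blast
  qed
qed

lemma maximal_singular_tuple_exists:
  "finite (vars F) \<Longrightarrow> \<exists>vs. maximal_singular_tuple F vs"
proof (induction "card (vars F)" arbitrary: F rule: less_induct)
  case less
  show ?case
  proof (cases "nonsingular F")
    case True
    then show ?thesis unfolding maximal_singular_tuple_def
      by (intro exI[of _ "[]"]) (simp add: DPs_def)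
  next
    case False
    then obtain v where v: "singular F v" by (auto simp: nonsingular_def)
    have "v \<in> vars F" using singular_in_vars[OF v] .
    then have "vars (DP v F) \<subset> vars F" using vars_DP_subset[of v F] by blast
    then have "card (vars (DP v F)) < card (vars F)" "finite (vars (DP v F))"
      using less.prems by (auto intro: psubset_card_mono finite_subset)
    then obtain vs where "maximal_singular_tuple (DP v F) vs" using less.hyps by blast
    then have "maximal_singular_tuple F (v # vs)"
      using v by (simp add: maximal_singular_tuple_def DPs_def)
    then show ?thesis by blast
  qed
qed

lemma singind_eq_1E:
  assumes "MU F" "singind F = 1"
  obtains v where "singular F v" "nonsingular (DP v F)"
proof -
  have "\<exists>vs. length vs = singind F \<and> maximal_singular_tuple F vs"
    unfolding singind_def
    by (rule LeastI_ex) (use maximal_singular_tuple_exists[OF finite_vars_MU[OF assms(1)]] in blast)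
  then obtain v where "maximal_singular_tuple F [v]"
    using assms(2) by (metis One_nat_def length_0_conv length_Suc_conv)
  then have "singular F v" "nonsingular (DP v F)"
    by (simp_all add: maximal_singular_tuple_def DPs_def)
  then show thesis by (rule that)
qed

lemma sdp_reach_one_step:
  assumes "sdp_reach F G"
    and "\<forall>u. singular F u \<longrightarrow> u \<in> V" and "\<forall>u\<in>V. nonsingular (DP u F)"
  shows "G = F \<or> (\<exists>u\<in>V. G = DP u F)"
proof -
  have "F' = F \<Longrightarrow> G' = F \<or> (\<exists>u\<in>V. G' = DP u F)" if "sdp_reach F' G'" for F' G'
    using that by induction (use assms(2,3) in \<open>auto simp: nonsingular_def\<close>)
  then show ?thesis using assms(1) by blast
qed

lemma sDP_subset_DP_image:
  assumes "singular F v"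
    and "\<forall>u. singular F u \<longrightarrow> u \<in> V" and "\<forall>u\<in>V. nonsingular (DP u F)"
  shows "sDP F \<subseteq> (\<lambda>u. DP u F) ` V"
  using sdp_reach_one_step[OF _ assms(2,3)] assms(1) by (fastforce simp: sDP_def nonsingular_def)

lemma isomorphic_refl: "isomorphic G G"
  unfolding isomorphic_def by (intro exI[of _ id]) simp

lemma isomorphic_sym:
  assumes "isomorphic F G"
  shows "isomorphic G F"
proof -
  obtain f :: "'a lit \<Rightarrow> 'b lit" where f: "bij f" "\<forall>x. f (comp x) = comp (f x)" "(\<lambda>C. f ` C) ` F = G"
    using assms unfolding isomorphic_def by blast
  have "inv f (comp y) = comp (inv f y)" for y
  proof -
    have "f (comp (inv f y)) = comp y"
      using f(2) surj_f_inv_f[OF bij_is_surj[OF f(1)]] by simp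
    then show ?thesis using bij_inv_eq_iff[OF f(1)] by metis
  qed
  moreover have "(\<lambda>C. inv f ` C) ` G = F"
    unfolding f(3)[symmetric] image_image by (simp add: image_inv_f_f bij_is_inj[OF f(1)])
  ultimately show ?thesis unfolding isomorphic_def using bij_imp_bij_inv[OF f(1)] by blast
qed

section \<open>Saturated clause-sets\<close>

lemma saturated_extension_model:
  assumes "saturated G" "C \<in> G" "lvar y \<in> vars G" "lvar y \<notin> var_cl C"
  obtains \<phi> where "\<forall>D\<in>G - {C}. \<exists>x\<in>D. lit_val \<phi> x" "lit_val \<phi> y"
proof -
  obtain \<phi> where \<phi>: "\<forall>D\<in>(G - {C}) \<union> {C \<union> {y}}. \<exists>x\<in>D. lit_val \<phi> x"
    using assms unfolding saturated_def satisfiable_def by blast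
  have "lit_val \<phi> y"
  proof (rule ccontr)
    assume "\<not> lit_val \<phi> y"
    then have "\<exists>x\<in>D. lit_val \<phi> x" if "D \<in> G" for D
      using \<phi> that by (cases "D = C") auto
    then have "satisfiable G" by (rule satisfiableI[rule_format])
    then show False using assms(1) by (simp add: saturated_def MU_def)
  qed
  with \<phi> show thesis using that by blast
qed

text \<open>Saturation gives a model of \<open>G - {E}\<close> making \<open>c\<close> true; if \<open>comp c \<notin> E\<close>, making \<open>comp b\<close> true
  in it satisfies \<open>E\<close> and keeps every clause with \<open>b\<close> satisfied by \<open>c\<close>.\<close>
lemma saturated_same_occurrences_comp:
  assumes sat: "saturated G" and bc: "lvar b \<noteq> lvar c"
    and eq: "{E\<in>G. b \<in> E} = {E\<in>G. c \<in> E}" and "lvar c \<in> vars G"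
    and E: "E \<in> G" "comp b \<in> E"
  shows "comp c \<in> E"
proof (rule ccontr)
  have mu: "MU G" using sat by (simp add: saturated_def)
  have iff: "b \<in> D \<longleftrightarrow> c \<in> D" if "D \<in> G" for D
    using eq that by blast
  assume "comp c \<notin> E"
  moreover have "c \<notin> E" using iff[OF E(1)] MU_comp_notin[OF mu E] by simp
  ultimately have "lvar c \<notin> var_cl E" by (rule lvar_notin_var_cl[rotated])
  then obtain \<phi> where \<phi>: "\<forall>D\<in>G - {E}. \<exists>x\<in>D. lit_val \<phi> x" "lit_val \<phi> c"
    using saturated_extension_model[OF sat E(1) \<open>lvar c \<in> vars G\<close>] by blast
  have "\<exists>x\<in>D. lit_val (make_true \<phi> (comp b)) x" if D: "D \<in> G" for D
  proof (cases "D = E")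
    case True
    then show ?thesis using E(2) lit_val_make_true_self by blast
  next
    case False
    then obtain x where x: "x \<in> D" "lit_val \<phi> x" using \<phi>(1) D by blast
    show ?thesis
    proof (cases "x = b")
      case True
      then have "c \<in> D" using iff[OF D] x(1) by simp
      moreover have "lit_val (make_true \<phi> (comp b)) c"
        using \<phi>(2) bc by (simp add: lit_val_make_true_other)
      ultimately show ?thesis by blast
    next
      case False
      then have "lit_val (make_true \<phi> (comp b)) x"
        using x(2) lvar_eq_lvarD[of x "comp b"] by (auto simp: lit_val_make_true)
      then show ?thesis using x(1) by blast
    qed
  qed
  then show False using satisfiableI MU_unsat[OF mu] by blast
qed

text \<open>The assignment falsifying only \<open>E0\<close> becomes a model once \<open>b\<close> is made true: a clause losing
  \<open>comp b\<close> still contains \<open>comp c\<close>, which is true because \<open>c \<in> E0\<close>.\<close>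
lemma saturated_distinct_occurrences:
  assumes sat: "saturated G" and bc: "lvar b \<noteq> lvar c"
    and eq: "{E\<in>G. b \<in> E} = {E\<in>G. c \<in> E}" and E0: "E0 \<in> G" "b \<in> E0"
  shows False
proof -
  have mu: "MU G" using sat by (simp add: saturated_def)
  have "c \<in> E0" using eq E0 by blast
  obtain \<phi> where \<phi>: "\<forall>D\<in>G. D \<noteq> E0 \<longrightarrow> (\<exists>x\<in>D. lit_val \<phi> x)" "\<forall>x\<in>E0. \<not> lit_val \<phi> x"
    using MU_falsifying_assignment[OF mu E0(1)] by blast
  have "\<exists>x\<in>D. lit_val (make_true \<phi> b) x" if D: "D \<in> G" for D
  proof (cases "D = E0")
    case True
    then show ?thesis using E0(2) lit_val_make_true_self by blast
  next
    case False
    then obtain x where x: "x \<in> D" "lit_val \<phi> x" using \<phi>(1) D by blast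
    show ?thesis
    proof (cases "x = comp b")
      case True
      then have "comp c \<in> D"
        using saturated_same_occurrences_comp[OF sat bc eq lvar_in_vars[OF E0(1) \<open>c \<in> E0\<close>] D] x(1)
        by simp
      moreover have "lit_val (make_true \<phi> b) (comp c)"
        using \<phi>(2) \<open>c \<in> E0\<close> bc by (simp add: lit_val_make_true_other)
      ultimately show ?thesis by blast
    next
      case False
      then have "lit_val (make_true \<phi> b) x"
        using x(2) lvar_eq_lvarD[of x b] by (auto simp: lit_val_make_true)
      then show ?thesis using x(1) by blast
    qed
  qed
  then show False using satisfiableI MU_unsat[OF mu] by blast
qed

section \<open>Eliminating a singular variable\<close>

locale singular_pivot =
  fixes F :: "'v cls" and s :: "'v lit" and C0 :: "'v clause" and v :: 'v
  assumes MU: "MU F" and occurrences_s: "{C\<in>F. s \<in> C} = {C0}" and lvar_s: "lvar s = v"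
begin

lemma C0_in_F: "C0 \<in> F" and s_in_C0: "s \<in> C0"
  using occurrences_s by blast+

lemma clause_with_s_eq: "C \<in> F \<Longrightarrow> s \<in> C \<Longrightarrow> C = C0"
  using occurrences_s by blast

lemma comp_s_notin_C0: "comp s \<notin> C0"
  using MU_comp_notin[OF MU C0_in_F s_in_C0] .

lemma s_notin_if_comp_s: "D \<in> F \<Longrightarrow> comp s \<in> D \<Longrightarrow> s \<notin> D"
  using MU_comp_notin[OF MU, of D "comp s"] by simp

lemma lvar_eq_v_iff: "lvar y = v \<longleftrightarrow> y = s \<or> y = comp s"
  using lvar_eq_lvarD[of y s] lvar_s by auto

lemma v_in_var_cl_iff: "v \<in> var_cl E \<longleftrightarrow> s \<in> E \<or> comp s \<in> E"
  by (auto simp: var_cl_iff lvar_eq_v_iff)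

lemma unique_clash: "D \<in> F \<Longrightarrow> comp s \<in> D \<Longrightarrow> C0 \<inter> comp ` D = {s}"
  using MU_unique_clash[OF MU occurrences_s] by blast

abbreviation resolvent :: "'v clause \<Rightarrow> 'v clause" where
  "resolvent D \<equiv> (C0 \<union> D) - {Pos v, Neg v}"

lemma DP_subset:
  "DP v F \<subseteq> {E\<in>F. v \<notin> var_cl E} \<union> resolvent ` {D\<in>F. comp s \<in> D}"
proof
  fix E assume "E \<in> DP v F"
  then consider "E \<in> F" "v \<notin> var_cl E"
    | C D where "E = (C \<union> D) - {Pos v, Neg v}" "C \<in> F" "D \<in> F" "C \<inter> comp ` D = {Pos v}"
    unfolding DP_def by blast
  then show "E \<in> {E\<in>F. v \<notin> var_cl E} \<union> resolvent ` {D\<in>F. comp s \<in> D}"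
  proof cases
    case 1
    then show ?thesis by blast
  next
    case 2
    have "Pos v \<in> C" "Pos v \<in> comp ` D" using 2(4) by blast+
    then have "Neg v \<in> D" by (simp add: mem_comp_image_iff)
    have "s = Pos v \<or> s = Neg v" using lvar_s by (cases s) auto
    then show ?thesis
    proof
      assume "s = Pos v"
      then have "C = C0" "comp s \<in> D"
        using clause_with_s_eq[OF 2(2)] \<open>Pos v \<in> C\<close> \<open>Neg v \<in> D\<close> by simp_all
      then show ?thesis using 2(1,3) by blast
    next
      assume "s = Neg v"
      then have "D = C0" "comp s \<in> C"
        using clause_with_s_eq[OF 2(3)] \<open>Neg v \<in> D\<close> \<open>Pos v \<in> C\<close> by simp_all
      moreover have "E = resolvent C" using 2(1) \<open>D = C0\<close> by (simp add: Un_commute)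
      ultimately show ?thesis using 2(2) by blast
    qed
  qed
qed

lemma DP_memI: "E \<in> F \<Longrightarrow> v \<notin> var_cl E \<Longrightarrow> E \<in> DP v F"
  unfolding DP_def by blast

lemma resolvent_in_DP:
  assumes "D \<in> F" "comp s \<in> D"
  shows "resolvent D \<in> DP v F"
proof -
  have clash: "C0 \<inter> comp ` D = {s}" using unique_clash[OF assms] .
  have "s = Pos v \<or> s = Neg v" using lvar_s by (cases s) auto
  then show ?thesis
  proof
    assume "s = Pos v"
    then show ?thesis using assms(1) C0_in_F clash unfolding DP_def by blast
  next
    assume "s = Neg v"
    have "D \<inter> comp ` C0 = comp ` (C0 \<inter> comp ` D)"
      by (simp add: comp_image_Int Int_commute)
    then have "D \<inter> comp ` C0 = {Pos v}" using clash \<open>s = Neg v\<close> by simp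
    moreover have "resolvent D = (D \<union> C0) - {Pos v, Neg v}" by (simp add: Un_commute)
    ultimately show ?thesis using assms(1) C0_in_F unfolding DP_def by blast
  qed
qed

lemma DP_eq: "DP v F = {E\<in>F. v \<notin> var_cl E} \<union> resolvent ` {D\<in>F. comp s \<in> D}"
proof (rule equalityI[OF DP_subset])
  show "{E\<in>F. v \<notin> var_cl E} \<union> resolvent ` {D\<in>F. comp s \<in> D} \<subseteq> DP v F"
    by (blast intro: DP_memI resolvent_in_DP)
qed

lemma DP_cases:
  assumes "E \<in> DP v F"
  obtains "E \<in> F" "v \<notin> var_cl E" | D where "E = resolvent D" "D \<in> F" "comp s \<in> D"
  using assms unfolding DP_eq by blast

lemma finite_DP: "finite (DP v F)"
  unfolding DP_eq using MU_finite[OF MU] by auto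

lemma occurs_in_DP:
  assumes "E \<in> F" "y \<in> E" "lvar y \<noteq> v"
  shows "\<exists>E'\<in>DP v F. y \<in> E'"
proof -
  consider "v \<notin> var_cl E" | "E = C0" | "comp s \<in> E"
    using v_in_var_cl_iff clause_with_s_eq assms(1) by blast
  then show ?thesis
  proof cases
    case 1
    then show ?thesis using DP_memI assms by blast
  next
    case 2
    obtain D where D: "D \<in> F" "comp s \<in> D" using MU_comp_occurs[OF MU C0_in_F s_in_C0] by blast
    have "y \<in> resolvent D" unfolding mem_resolvent_iff using assms(2,3) 2 by simp
    then show ?thesis using resolvent_in_DP[OF D] by (rule bexI)
  next
    case 3
    have "y \<in> resolvent E" unfolding mem_resolvent_iff using assms(2,3) by simp
    then show ?thesis using resolvent_in_DP[OF assms(1) 3] by (rule bexI)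
  qed
qed

lemma resolvent_is_clause:
  assumes D: "D \<in> F" "comp s \<in> D"
  shows "is_clause (resolvent D)"
  unfolding is_clause_def
proof (intro conjI ballI)
  show "finite (resolvent D)" using MU_finite_clause[OF MU] C0_in_F D(1) by auto
  fix x assume x: "x \<in> resolvent D"
  show "comp x \<notin> resolvent D"
  proof
    assume cx: "comp x \<in> resolvent D"
    have "lvar x \<noteq> v" using x unfolding mem_resolvent_iff by blast
    then have "x \<noteq> s" "comp x \<noteq> s" using lvar_s lvar_comp by metis+
    then have "x \<notin> C0 \<inter> comp ` D" "comp x \<notin> C0 \<inter> comp ` D"
      unfolding unique_clash[OF D] by simp_all
    moreover have "x \<in> C0 \<or> x \<in> D" "comp x \<in> C0 \<or> comp x \<in> D"
      using x cx unfolding mem_resolvent_iff by blast+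
    moreover have "comp x \<notin> C0" if "x \<in> C0" using MU_comp_notin[OF MU C0_in_F that] .
    moreover have "comp x \<notin> D" if "x \<in> D" using MU_comp_notin[OF MU D(1) that] .
    ultimately show False by (auto simp: mem_comp_image_iff)
  qed
qed

lemma DP_model_on_v_free_clause:
  assumes "\<forall>E\<in>DP v F. \<exists>x\<in>E. lit_val \<phi> x" and "E \<in> F" "v \<notin> var_cl E" and "lvar z = v"
  shows "\<exists>y\<in>E. lit_val (make_true \<phi> z) y"
proof -
  obtain y where "y \<in> E" "lit_val \<phi> y" using assms(1) DP_memI[OF assms(2,3)] by blast
  moreover have "lvar y \<noteq> lvar z" using assms(3,4) lvar_in_var_cl[OF \<open>y \<in> E\<close>] by auto
  ultimately show ?thesis using lit_val_make_true_other by blast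
qed

lemma DP_model_extends_if_C0_true:
  assumes \<phi>: "\<forall>E\<in>DP v F. \<exists>x\<in>E. lit_val \<phi> x" and z: "z \<in> C0" "z \<noteq> s" "lit_val \<phi> z"
  shows "satisfiable F"
proof -
  have "lvar z \<noteq> v" using z comp_s_notin_C0 lvar_eq_v_iff by auto
  have "\<exists>y\<in>E. lit_val (make_true \<phi> (comp s)) y" if E: "E \<in> F" for E
  proof -
    consider "v \<notin> var_cl E" | "E = C0" | "comp s \<in> E"
      using v_in_var_cl_iff clause_with_s_eq E by blast
    then show ?thesis
    proof cases
      case 1
      then show ?thesis using DP_model_on_v_free_clause[OF \<phi> E] lvar_s by simp
    next
      case 2
      have "lit_val (make_true \<phi> (comp s)) z"
        using z(3) \<open>lvar z \<noteq> v\<close> lvar_s by (simp add: lit_val_make_true_other)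
      then show ?thesis using z(1) 2 by blast
    next
      case 3
      then show ?thesis using lit_val_make_true_self by blast
    qed
  qed
  then show ?thesis by (rule satisfiableI[rule_format])
qed

lemma DP_model_extends_if_C0_false:
  assumes \<phi>: "\<forall>E\<in>DP v F. \<exists>x\<in>E. lit_val \<phi> x" and C0_false: "\<forall>z\<in>C0 - {s}. \<not> lit_val \<phi> z"
  shows "satisfiable F"
proof -
  have "\<exists>y\<in>E. lit_val (make_true \<phi> s) y" if E: "E \<in> F" for E
  proof -
    consider "v \<notin> var_cl E" | "s \<in> E" | "comp s \<in> E"
      using v_in_var_cl_iff by blast
    then show ?thesis
    proof cases
      case 1
      then show ?thesis using DP_model_on_v_free_clause[OF \<phi> E] lvar_s by simp
    next
      case 2
      then show ?thesis using lit_val_make_true_self by blast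
    next
      case 3
      obtain y where y: "y \<in> resolvent E" "lit_val \<phi> y"
        using \<phi> resolvent_in_DP[OF E 3] by blast
      then have "lvar y \<noteq> v" "y \<in> E"
        using C0_false lvar_s unfolding mem_resolvent_iff by auto
      moreover have "lit_val (make_true \<phi> s) y"
        using y(2) \<open>lvar y \<noteq> v\<close> lvar_s by (simp add: lit_val_make_true_other)
      ultimately show ?thesis by blast
    qed
  qed
  then show ?thesis by (rule satisfiableI[rule_format])
qed

lemma DP_unsat: "\<not> satisfiable (DP v F)"
proof
  assume "satisfiable (DP v F)"
  then obtain \<phi> where \<phi>: "\<forall>E\<in>DP v F. \<exists>x\<in>E. lit_val \<phi> x" by (auto simp: satisfiable_def)
  have "satisfiable F"
  proof (cases "\<exists>z\<in>C0 - {s}. lit_val \<phi> z")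
    case True
    then obtain z where "z \<in> C0" "z \<noteq> s" "lit_val \<phi> z" by blast
    then show ?thesis by (rule DP_model_extends_if_C0_true[OF \<phi>])
  next
    case False
    then show ?thesis using DP_model_extends_if_C0_false[OF \<phi>] by blast
  qed
  then show False using MU_unsat[OF MU] by simp
qed

lemma DP_minimal_clause_of_F:
  assumes E: "E \<in> F" "v \<notin> var_cl E"
  shows "satisfiable (DP v F - {E})"
proof -
  obtain \<phi> where \<phi>: "\<forall>D\<in>F. D \<noteq> E \<longrightarrow> (\<exists>x\<in>D. lit_val \<phi> x)"
    using MU_falsifying_assignment[OF MU E(1)] by blast
  have "C0 \<noteq> E" using E(2) s_in_C0 v_in_var_cl_iff by blast
  then obtain z where z: "z \<in> C0" "lit_val \<phi> z" using \<phi> C0_in_F by blast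
  have "\<exists>x\<in>E'. lit_val \<phi> x" if E': "E' \<in> DP v F" "E' \<noteq> E" for E'
    using E'(1)
  proof (cases rule: DP_cases)
    case 1
    then show ?thesis using \<phi> E'(2) by blast
  next
    case (2 D)
    have "D \<noteq> E" using 2(3) E(2) v_in_var_cl_iff by blast
    then obtain y where y: "y \<in> D" "lit_val \<phi> y" using \<phi> 2(2) by blast
    show ?thesis
    proof (cases "z = s")
      case False
      then have "lvar z \<noteq> v" using z(1) comp_s_notin_C0 lvar_eq_v_iff by blast
      then have "z \<in> E'" unfolding 2(1) mem_resolvent_iff using z(1) by simp
      then show ?thesis using z(2) by blast
    next
      case True
      then have "y \<noteq> comp s" "y \<noteq> s" using z(2) y s_notin_if_comp_s[OF 2(2,3)] by auto
      then have "lvar y \<noteq> v" using lvar_eq_v_iff by blast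
      then have "y \<in> E'" unfolding 2(1) mem_resolvent_iff using y(1) by simp
      then show ?thesis using y(2) by blast
    qed
  qed
  then show ?thesis by (intro satisfiableI) blast
qed

lemma DP_minimal_resolvent:
  assumes D0: "D0 \<in> F" "comp s \<in> D0"
  shows "satisfiable (DP v F - {resolvent D0})"
proof -
  obtain \<phi> where \<phi>: "\<forall>D\<in>F. D \<noteq> D0 \<longrightarrow> (\<exists>x\<in>D. lit_val \<phi> x)" "\<forall>x\<in>D0. \<not> lit_val \<phi> x"
    using MU_falsifying_assignment[OF MU D0(1)] by blast
  have "\<not> lit_val \<phi> (comp s)" using \<phi>(2) D0(2) by blast
  have "\<exists>x\<in>E'. lit_val \<phi> x" if E': "E' \<in> DP v F" "E' \<noteq> resolvent D0" for E'
    using E'(1)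
  proof (cases rule: DP_cases)
    case 1
    have "E' \<noteq> D0" using 1(2) D0(2) v_in_var_cl_iff by blast
    then show ?thesis using \<phi>(1) 1(1) by blast
  next
    case (2 D)
    have "D \<noteq> D0"
    proof
      assume "D = D0"
      with E'(2) 2(1) show False by simp
    qed
    then obtain y where y: "y \<in> D" "lit_val \<phi> y" using \<phi>(1) 2(2) by blast
    then have "y \<noteq> comp s" "y \<noteq> s"
      using \<open>\<not> lit_val \<phi> (comp s)\<close> s_notin_if_comp_s[OF 2(2,3)] by auto
    then have "lvar y \<noteq> v" using lvar_eq_v_iff by blast
    then have "y \<in> E'" unfolding 2(1) mem_resolvent_iff using y(1) by simp
    then show ?thesis using y(2) by blast
  qed
  then show ?thesis by (intro satisfiableI) blast
qed

lemma DP_minimal: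
  assumes "E \<in> DP v F"
  shows "satisfiable (DP v F - {E})"
  using assms
proof (cases rule: DP_cases)
  case 1
  then show ?thesis by (rule DP_minimal_clause_of_F)
next
  case (2 D)
  then show ?thesis using DP_minimal_resolvent by simp
qed

lemma MU_DP: "MU (DP v F)"
  unfolding MU_def is_clause_set_def
proof (intro conjI ballI finite_DP DP_unsat DP_minimal)
  fix E assume "E \<in> DP v F"
  then show "is_clause E"
  proof (cases rule: DP_cases)
    case 1
    then show ?thesis using MU by (auto simp: MU_def is_clause_set_def)
  next
    case (2 D)
    then show ?thesis using resolvent_is_clause by simp
  qed
qed

text \<open>A degree-one literal outside \<open>C0\<close> passes into at most one clause of \<open>DP v F\<close>; one inside
  \<open>C0\<close> passes into every resolvent on \<open>s\<close>, of which there is only one if \<open>comp s\<close> has degree one.\<close>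
lemma ldeg_DP_le_1:
  assumes "ldeg F x = 1" and "x \<notin> C0 \<or> ldeg F (comp s) = 1"
  shows "ldeg (DP v F) x \<le> 1"
proof -
  obtain E0 where E0: "{C\<in>F. x \<in> C} = {E0}" using assms(1) by (rule ldeg_eq_1E)
  have "\<exists>e. {E\<in>DP v F. x \<in> E} \<subseteq> {e}"
  proof (cases "x \<in> C0")
    case False
    have "E = (if v \<in> var_cl E0 then resolvent E0 else E0)" if E: "E \<in> DP v F" "x \<in> E" for E
      using E(1)
    proof (cases rule: DP_cases)
      case 1
      have "E = E0" using E0 1(1) E(2) by blast
      with 1(2) show ?thesis by simp
    next
      case (2 D)
      then have "x \<in> D" using E(2) False unfolding mem_resolvent_iff by blast
      then have "D = E0" using E0 2(2) by blast
      moreover have "v \<in> var_cl D" using 2(3) v_in_var_cl_iff by blast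
      ultimately show ?thesis using 2(1) by simp
    qed
    then show ?thesis by blast
  next
    case True
    then have "ldeg F (comp s) = 1" using assms(2) by blast
    then obtain D1 where D1: "{C\<in>F. comp s \<in> C} = {D1}" by (rule ldeg_eq_1E)
    have "E = resolvent D1" if E: "E \<in> DP v F" "x \<in> E" for E
      using E(1)
    proof (cases rule: DP_cases)
      case 1
      have "E = E0" "C0 = E0" using E0 1(1) E(2) C0_in_F True by blast+
      then show ?thesis using 1(2) s_in_C0 v_in_var_cl_iff by simp
    next
      case (2 D)
      then have "D = D1" using D1 by blast
      then show ?thesis using 2(1) by simp
    qed
    then show ?thesis by blast
  qed
  then show ?thesis using ldeg_le_1 by metis
qed

lemma singular_DP_if_ldeg_1:
  assumes "lvar x \<noteq> v" "ldeg F x = 1" and "x \<notin> C0 \<or> ldeg F (comp s) = 1"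
  shows "singular (DP v F) (lvar x)"
proof -
  obtain E0 where "{C\<in>F. x \<in> C} = {E0}" using assms(2) by (rule ldeg_eq_1E)
  then have "E0 \<in> F" "x \<in> E0" by blast+
  then have "0 < ldeg (DP v F) x"
    using occurs_in_DP assms(1) ldeg_pos_iff[OF finite_DP] by blast
  moreover obtain D where "D \<in> F" "comp x \<in> D" using MU_comp_occurs[OF MU \<open>E0 \<in> F\<close> \<open>x \<in> E0\<close>] by blast
  then have "0 < ldeg (DP v F) (comp x)"
    using occurs_in_DP[of D "comp x"] assms(1) ldeg_pos_iff[OF finite_DP] by auto
  ultimately show ?thesis using ldeg_DP_le_1[OF assms(2,3)] unfolding singular_lvar_iff by simp
qed

lemma occurrences_in_DP_of_C0_lit:
  assumes "x \<in> C0" "lvar x \<noteq> v" "ldeg F x = 1"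
  shows "{E\<in>DP v F. x \<in> E} = resolvent ` {D\<in>F. comp s \<in> D}"
proof (intro equalityI subsetI)
  fix E assume "E \<in> {E\<in>DP v F. x \<in> E}"
  then have E: "E \<in> DP v F" "x \<in> E" by auto
  from E(1) show "E \<in> resolvent ` {D\<in>F. comp s \<in> D}"
  proof (cases rule: DP_cases)
    case 1
    obtain E0 where E0: "{C\<in>F. x \<in> C} = {E0}" using assms(3) by (rule ldeg_eq_1E)
    have "E = E0" "C0 = E0" using E0 1(1) E(2) C0_in_F assms(1) by blast+
    then show ?thesis using 1(2) s_in_C0 v_in_var_cl_iff by simp
  next
    case (2 D)
    then show ?thesis by blast
  qed
next
  fix E assume "E \<in> resolvent ` {D\<in>F. comp s \<in> D}"
  then obtain D where D: "D \<in> F" "comp s \<in> D" "E = resolvent D" by blast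
  have "x \<in> E" unfolding D(3) mem_resolvent_iff using assms(1,2) by simp
  then show "E \<in> {E\<in>DP v F. x \<in> E}" using resolvent_in_DP[OF D(1,2)] D(3) by simp
qed

end

section \<open>Swapping two variables\<close>

definition swap_lit :: "'v lit \<Rightarrow> 'v lit \<Rightarrow> 'v lit \<Rightarrow> 'v lit" where
  "swap_lit s t x = (if x = s then comp t else if x = comp s then t
     else if x = t then comp s else if x = comp t then s else x)"

context
  fixes s t :: "'v lit"
  assumes lvar_neq: "lvar s \<noteq> lvar t"
begin

lemma lits_neq_if_lvar_neq: "s \<noteq> t" "s \<noteq> comp t" "comp s \<noteq> t"
  using lvar_neq by (metis lvar_comp)+

lemma swap_lit_simps [simp]:
  "swap_lit s t s = comp t" "swap_lit s t (comp s) = t"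
  "swap_lit s t t = comp s" "swap_lit s t (comp t) = s"
  using lits_neq_if_lvar_neq by (auto simp: swap_lit_def)

lemma swap_lit_other:
  "x \<noteq> s \<Longrightarrow> x \<noteq> comp s \<Longrightarrow> x \<noteq> t \<Longrightarrow> x \<noteq> comp t \<Longrightarrow> swap_lit s t x = x"
  by (simp add: swap_lit_def)

lemma swap_lit_cases:
  obtains "x = s" | "x = comp s" | "x = t" | "x = comp t"
    | "x \<noteq> s" "x \<noteq> comp s" "x \<noteq> t" "x \<noteq> comp t" "swap_lit s t x = x"
  using swap_lit_other by blast

lemma swap_lit_swap_lit [simp]: "swap_lit s t (swap_lit s t x) = x"
  by (cases x rule: swap_lit_cases) auto

lemma swap_lit_comp: "swap_lit s t (comp x) = comp (swap_lit s t x)"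
proof (cases x rule: swap_lit_cases)
  case 5
  then have "comp x \<noteq> s" "comp x \<noteq> comp s" "comp x \<noteq> t" "comp x \<noteq> comp t"
    by (metis comp_comp)+
  then show ?thesis using 5 swap_lit_other by simp
qed auto

lemma mem_swap_image_iff: "x \<in> swap_lit s t ` E \<longleftrightarrow> swap_lit s t x \<in> E"
  by (metis swap_lit_swap_lit image_iff)

lemma swap_image_swap_image [simp]: "swap_lit s t ` swap_lit s t ` E = E"
  by (simp add: image_image)

lemma bij_swap_lit: "bij (swap_lit s t)"
  by (metis bijI' swap_lit_swap_lit)

lemma isomorphic_swap_image: "isomorphic G ((\<lambda>E. swap_lit s t ` E) ` G)"
  unfolding isomorphic_def
  by (intro exI[of _ "swap_lit s t"] conjI allI bij_swap_lit swap_lit_comp) simp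

lemma ldeg_swap_image: "ldeg ((\<lambda>E. swap_lit s t ` E) ` G) x = ldeg G (swap_lit s t x)"
proof -
  have "inj_on (\<lambda>E. swap_lit s t ` E) A" for A
    by (rule inj_onI) (metis swap_image_swap_image)
  moreover have "{E\<in>(\<lambda>E. swap_lit s t ` E) ` G. x \<in> E} = (\<lambda>E. swap_lit s t ` E) ` {E\<in>G. swap_lit s t x \<in> E}"
    by (auto simp: mem_swap_image_iff)
  ultimately show ?thesis unfolding ldeg_def by (simp add: card_image)
qed

lemma nonsingular_swap_image:
  assumes "nonsingular G"
  shows "nonsingular ((\<lambda>E. swap_lit s t ` E) ` G)"
  unfolding nonsingular_def
proof (intro allI notI)
  fix u assume "singular ((\<lambda>E. swap_lit s t ` E) ` G) u"
  then have "min (ldeg G (swap_lit s t (Pos u))) (ldeg G (comp (swap_lit s t (Pos u)))) = 1"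
    using singular_lvar_iff[of _ "Pos u"] swap_lit_comp[of "Pos u"] by (simp add: ldeg_swap_image)
  then have "singular G (lvar (swap_lit s t (Pos u)))" unfolding singular_lvar_iff .
  then show False using assms by (simp add: nonsingular_def)
qed

end

section \<open>Padding clauses with literals of high degree\<close>

lemma ldeg_image_le:
  assumes "finite G" and "\<forall>E\<in>G. E \<subseteq> pad E \<and> pad E \<subseteq> E \<union> R" and "x \<notin> R"
  shows "ldeg (pad ` G) x \<le> ldeg G x"
proof -
  have "{E'\<in>pad ` G. x \<in> E'} \<subseteq> pad ` {E\<in>G. x \<in> E}"
    using assms(2,3) by blast
  then have "card {E'\<in>pad ` G. x \<in> E'} \<le> card (pad ` {E\<in>G. x \<in> E})"
    by (rule card_mono[rotated]) (use assms(1) in simp)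
  also have "\<dots> \<le> card {E\<in>G. x \<in> E}"
    by (rule card_image_le) (use assms(1) in simp)
  finally show ?thesis by (simp add: ldeg_def)
qed

lemma ldeg_image_pos:
  assumes "finite G" and "\<forall>E\<in>G. E \<subseteq> pad E" and "0 < ldeg G x"
  shows "0 < ldeg (pad ` G) x"
  using assms ldeg_pos_iff[of G] ldeg_pos_iff[of "pad ` G"] by blast

text \<open>Enlarging clauses by literals \<open>R\<close> that already have degree at least two cannot destroy
  singularity, so nonsingularity transfers back.\<close>
lemma nonsingular_if_padding_nonsingular:
  assumes fin: "finite G" and pad: "\<forall>E\<in>G. E \<subseteq> pad E \<and> pad E \<subseteq> E \<union> R"
    and R_deg: "\<forall>r\<in>R. 2 \<le> ldeg G r" and "nonsingular (pad ` G)"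
  shows "nonsingular G"
  unfolding nonsingular_def
proof (intro allI notI)
  fix u assume "singular G u"
  then have m: "min (ldeg G (Pos u)) (ldeg G (Neg u)) = 1" by (simp add: singular_def)
  have "0 < ldeg (pad ` G) (Pos u)" "0 < ldeg (pad ` G) (Neg u)"
    using m ldeg_image_pos[OF fin] pad by (auto simp: min_def split: if_splits)
  moreover have "min (ldeg (pad ` G) (Pos u)) (ldeg (pad ` G) (Neg u)) \<noteq> 1"
    using assms(4) by (simp add: nonsingular_def singular_def)
  ultimately have deg_2: "2 \<le> ldeg (pad ` G) x" if "lvar x = u" for x
    using that by (cases x) (auto simp: min_def split: if_splits)
  obtain x where x: "lvar x = u" "ldeg G x = 1" using singularE[OF \<open>singular G u\<close>] .
  then have "x \<notin> R" using R_deg by force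
  then show False using ldeg_image_le[OF fin pad] deg_2[OF x(1)] x(2) by force
qed

section \<open>Two singular literals in a common clause\<close>

locale twin_pivots =
  fixes F :: "'v cls" and s t :: "'v lit" and C0 :: "'v clause" and v w :: 'v
  assumes MU: "MU F" and occurrences_s: "{C\<in>F. s \<in> C} = {C0}"
    and occurrences_t: "{C\<in>F. t \<in> C} = {C0}"
    and lvar_s: "lvar s = v" and lvar_t: "lvar t = w" and v_neq_w: "v \<noteq> w"
begin

sublocale S: singular_pivot F s C0 v
  by unfold_locales (rule MU occurrences_s lvar_s)+

sublocale T: singular_pivot F t C0 w
  by unfold_locales (rule MU occurrences_t lvar_t)+

lemma twin_pivots_swapped: "twin_pivots F t s C0 w v"
  by unfold_locales (use MU occurrences_s occurrences_t lvar_s lvar_t v_neq_w in auto)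

lemma lvar_s_neq_lvar_t: "lvar s \<noteq> lvar t"
  using lvar_s lvar_t v_neq_w by simp

lemma comp_t_clause_avoids_v:
  assumes "B \<in> F" "comp t \<in> B"
  shows "s \<notin> B" "comp s \<notin> B"
proof -
  show "s \<notin> B"
    using assms S.clause_with_s_eq T.comp_s_notin_C0 by blast
  show "comp s \<notin> B"
  proof
    assume "comp s \<in> B"
    then have "s \<in> C0 \<inter> comp ` B" using S.s_in_C0 by (simp add: mem_comp_image_iff)
    then have "s = t" using T.unique_clash[OF assms] by blast
    then show False using lvar_s_neq_lvar_t by simp
  qed
qed

lemma comp_t_clause_in_DP_v: "B \<in> F \<Longrightarrow> comp t \<in> B \<Longrightarrow> B \<in> DP v F"
  using S.DP_memI S.v_in_var_cl_iff comp_t_clause_avoids_v by blast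

lemma DP_v_clause_with_t_contains_C0:
  assumes E: "E \<in> DP v F" "t \<in> E"
  shows "C0 - {s} \<subseteq> E"
  using E(1)
proof (cases rule: S.DP_cases)
  case 1
  then have "E = C0" using E(2) T.clause_with_s_eq by blast
  then show ?thesis using 1(2) S.s_in_C0 S.v_in_var_cl_iff by simp
next
  case (2 D)
  show ?thesis
  proof
    fix r assume "r \<in> C0 - {s}"
    moreover have "r \<noteq> comp s" using \<open>r \<in> C0 - {s}\<close> S.comp_s_notin_C0 by blast
    ultimately have "r \<in> C0" "lvar r \<noteq> v" using S.lvar_eq_v_iff by auto
    then show "r \<in> E" unfolding 2(1) mem_resolvent_iff by simp
  qed
qed

lemma DP_v_model_with_t_false:
  assumes B: "B \<in> F" "comp t \<in> B" and \<phi>: "\<forall>D\<in>DP v F - {B}. \<exists>x\<in>D. lit_val \<phi> x"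
    and r: "r \<in> C0 - {s, t}" "lit_val \<phi> r"
  shows "satisfiable (DP v F)"
proof -
  have "lvar r \<noteq> w" using r T.comp_s_notin_C0 T.lvar_eq_v_iff by auto
  have "\<exists>x\<in>D. lit_val (make_true \<phi> (comp t)) x" if D: "D \<in> DP v F" for D
  proof (cases "D = B")
    case True
    then show ?thesis using B(2) lit_val_make_true_self by blast
  next
    case False
    then obtain x where x: "x \<in> D" "lit_val \<phi> x" using \<phi> D by blast
    consider "x = t" | "x = comp t" | "lvar x \<noteq> w"
      using T.lvar_eq_v_iff by blast
    then show ?thesis
    proof cases
      case 1
      have "lit_val (make_true \<phi> (comp t)) r"
        using r(2) \<open>lvar r \<noteq> w\<close> lvar_t by (simp add: lit_val_make_true_other)
      then show ?thesis using DP_v_clause_with_t_contains_C0[OF D] x(1) 1 r(1) by blast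
    next
      case 2
      then show ?thesis using x(1) lit_val_make_true_self by blast
    next
      case 3
      then have "lit_val (make_true \<phi> (comp t)) x"
        using x(2) lvar_t by (simp add: lit_val_make_true_other)
      then show ?thesis using x(1) by blast
    qed
  qed
  then show ?thesis by (rule satisfiableI[rule_format])
qed

text \<open>If \<open>B\<close> missed some \<open>r \<in> C0 - {s, t}\<close>, saturation would give a model of \<open>DP v F - {B}\<close>
  making \<open>r\<close> true, and making \<open>t\<close> false in it would satisfy \<open>DP v F\<close>.\<close>
lemma comp_t_clause_contains_C0:
  assumes sat: "saturated (DP v F)" and B: "B \<in> F" "comp t \<in> B"
  shows "C0 - {s, t} \<subseteq> B"
proof
  fix r assume r: "r \<in> C0 - {s, t}"
  show "r \<in> B"
  proof (rule ccontr)
    assume "r \<notin> B"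
    have "lvar r \<noteq> v" using r S.comp_s_notin_C0 S.lvar_eq_v_iff by auto
    have "comp r \<notin> B"
    proof
      assume "comp r \<in> B"
      then have "r \<in> C0 \<inter> comp ` B" using r by (simp add: mem_comp_image_iff)
      then show False using T.unique_clash[OF B] r by blast
    qed
    then have "lvar r \<notin> var_cl B" using \<open>r \<notin> B\<close> by (rule lvar_notin_var_cl[rotated])
    moreover have "lvar r \<in> vars (DP v F)"
      using S.occurs_in_DP[OF S.C0_in_F _ \<open>lvar r \<noteq> v\<close>] r lvar_in_vars by blast
    ultimately obtain \<phi> where "\<forall>D\<in>DP v F - {B}. \<exists>x\<in>D. lit_val \<phi> x" "lit_val \<phi> r"
      using saturated_extension_model[OF sat comp_t_clause_in_DP_v[OF B]] by blast
    then have "satisfiable (DP v F)" using DP_v_model_with_t_false[OF B _ r] by blast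
    then show False using S.DP_unsat by simp
  qed
qed

abbreviation swap :: "'v lit \<Rightarrow> 'v lit" where
  "swap \<equiv> swap_lit s t"

lemmas swap_simps [simp] = swap_lit_simps[OF lvar_s_neq_lvar_t]
lemmas swap_cases = swap_lit_cases[OF lvar_s_neq_lvar_t]
lemmas mem_swap_image = mem_swap_image_iff[OF lvar_s_neq_lvar_t]

lemma comp_s_clause_avoids_w: "D \<in> F \<Longrightarrow> comp s \<in> D \<Longrightarrow> t \<notin> D \<and> comp t \<notin> D"
  using twin_pivots.comp_t_clause_avoids_v[OF twin_pivots_swapped] by blast

lemma swap_image_comp_t_clause:
  assumes B: "B \<in> F" "comp t \<in> B" and R: "C0 - {s, t} \<subseteq> B"
  shows "swap ` B = T.resolvent B"
proof (rule set_eqI)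
  fix x
  have "s \<notin> B" "comp s \<notin> B" "t \<notin> B"
    using comp_t_clause_avoids_v[OF B] T.s_notin_if_comp_s[OF B] by auto
  then have "swap x \<in> B \<longleftrightarrow> (x \<in> C0 \<or> x \<in> B) \<and> lvar x \<noteq> w"
    using B(2) S.s_in_C0 S.comp_s_notin_C0 R lvar_s lvar_t v_neq_w T.lvar_eq_v_iff
    by (cases x rule: swap_cases) auto
  then show "x \<in> swap ` B \<longleftrightarrow> x \<in> T.resolvent B"
    unfolding mem_swap_image mem_resolvent_iff .
qed

lemma swap_image_resolvent:
  assumes D: "D \<in> F" "comp s \<in> D"
  shows "swap ` S.resolvent D = D \<union> (C0 - {s, t})"
proof (rule set_eqI)
  fix x
  have "t \<notin> D" "comp t \<notin> D" "s \<notin> D"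
    using comp_s_clause_avoids_w[OF D] S.s_notin_if_comp_s[OF D] by auto
  then have "(swap x \<in> C0 \<or> swap x \<in> D) \<and> lvar (swap x) \<noteq> v \<longleftrightarrow> x \<in> D \<union> (C0 - {s, t})"
    using D(2) T.s_in_C0 T.comp_s_notin_C0 lvar_s lvar_t v_neq_w S.lvar_eq_v_iff
    by (cases x rule: swap_cases) auto
  then show "x \<in> swap ` S.resolvent D \<longleftrightarrow> x \<in> D \<union> (C0 - {s, t})"
    unfolding mem_swap_image mem_resolvent_iff .
qed

lemma swap_image_id:
  assumes "s \<notin> E" "comp s \<notin> E" "t \<notin> E" "comp t \<notin> E"
  shows "swap ` E = E"
proof (rule set_eqI)
  fix x
  show "x \<in> swap ` E \<longleftrightarrow> x \<in> E"
    unfolding mem_swap_image by (cases x rule: swap_cases) (use assms in auto)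
qed

text \<open>The swap sends the resolvent of \<open>C0\<close> and \<open>D\<close> on \<open>v\<close> to \<open>D \<union> (C0 - {s, t})\<close>. Padding the clauses
  of \<open>DP w F\<close> that contain \<open>comp s\<close> in the same way makes the two clause-sets correspond using
  saturation at \<open>v\<close> only; this is what shows that \<open>DP w F\<close> is nonsingular.\<close>
definition pad :: "'v clause \<Rightarrow> 'v clause" where
  "pad E = (if comp s \<in> E then E \<union> (C0 - {s, t}) else E)"

lemma pad_eq_self: "comp s \<notin> E \<Longrightarrow> pad E = E"
  by (simp add: pad_def)

lemma pad_eq: "comp s \<in> E \<Longrightarrow> pad E = E \<union> (C0 - {s, t})"
  by (simp add: pad_def)

lemma swap_image_DP_v_subset:
  assumes comp_t_clauses: "\<forall>B\<in>F. comp t \<in> B \<longrightarrow> C0 - {s, t} \<subseteq> B"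
  shows "(\<lambda>E. swap ` E) ` DP v F \<subseteq> pad ` DP w F"
proof
  fix X assume "X \<in> (\<lambda>E. swap ` E) ` DP v F"
  then obtain E where E: "E \<in> DP v F" "X = swap ` E" by blast
  from E(1) show "X \<in> pad ` DP w F"
  proof (cases rule: S.DP_cases)
    case 1
    then have "s \<notin> E" "comp s \<notin> E" using S.v_in_var_cl_iff by auto
    show ?thesis
    proof (cases "comp t \<in> E")
      case True
      have "comp s \<notin> T.resolvent E"
        unfolding mem_resolvent_iff using \<open>comp s \<notin> E\<close> S.comp_s_notin_C0 by simp
      have "X = pad (T.resolvent E)"
        using swap_image_comp_t_clause[OF 1(1) True] comp_t_clauses 1(1) True E(2) pad_eq_self[OF \<open>comp s \<notin> T.resolvent E\<close>]
        by simp
      then show ?thesis using T.resolvent_in_DP[OF 1(1) True] by (rule image_eqI)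
    next
      case False
      have "t \<notin> E" using \<open>s \<notin> E\<close> 1(1) T.clause_with_s_eq S.s_in_C0 by blast
      then have "E \<in> DP w F" using T.DP_memI[OF 1(1)] T.v_in_var_cl_iff False by blast
      moreover have "X = pad E"
        using swap_image_id \<open>s \<notin> E\<close> \<open>comp s \<notin> E\<close> \<open>t \<notin> E\<close> False E(2) pad_eq_self by simp
      ultimately show ?thesis by blast
    qed
  next
    case (2 D)
    then have "t \<notin> D" "comp t \<notin> D" using comp_s_clause_avoids_w by auto
    then have "D \<in> DP w F" using T.DP_memI[OF 2(2)] T.v_in_var_cl_iff by blast
    moreover have "X = pad D"
      using swap_image_resolvent[OF 2(2,3)] E(2) 2(1) pad_eq[OF 2(3)] by simp
    ultimately show ?thesis by blast
  qed
qed

lemma pad_image_DP_w_subset: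
  assumes comp_t_clauses: "\<forall>B\<in>F. comp t \<in> B \<longrightarrow> C0 - {s, t} \<subseteq> B"
  shows "pad ` DP w F \<subseteq> (\<lambda>E. swap ` E) ` DP v F"
proof
  fix X assume "X \<in> pad ` DP w F"
  then obtain E where E: "E \<in> DP w F" "X = pad E" by blast
  from E(1) show "X \<in> (\<lambda>E. swap ` E) ` DP v F"
  proof (cases rule: T.DP_cases)
    case 1
    then have "t \<notin> E" "comp t \<notin> E" using T.v_in_var_cl_iff by auto
    show ?thesis
    proof (cases "comp s \<in> E")
      case True
      have "X = swap ` S.resolvent E"
        using swap_image_resolvent[OF 1(1) True] E(2) pad_eq[OF True] by simp
      then show ?thesis using S.resolvent_in_DP[OF 1(1) True] by (rule image_eqI)
    next
      case False
      have "s \<notin> E" using \<open>t \<notin> E\<close> 1(1) S.clause_with_s_eq T.s_in_C0 by blast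
      then have "E \<in> DP v F" using S.DP_memI[OF 1(1)] S.v_in_var_cl_iff False by blast
      moreover have "X = swap ` E"
        using swap_image_id \<open>s \<notin> E\<close> False \<open>t \<notin> E\<close> \<open>comp t \<notin> E\<close> E(2) pad_eq_self[OF False]
        by simp
      ultimately show ?thesis by blast
    qed
  next
    case (2 B)
    then have "s \<notin> B" "comp s \<notin> B" using comp_t_clause_avoids_v by auto
    then have "comp s \<notin> E"
      unfolding 2(1) mem_resolvent_iff using S.comp_s_notin_C0 by simp
    then have "X = swap ` B"
      using swap_image_comp_t_clause[OF 2(2,3)] comp_t_clauses 2 E(2) pad_eq_self[OF \<open>comp s \<notin> E\<close>] by simp
    then show ?thesis using comp_t_clause_in_DP_v[OF 2(2,3)] by (rule image_eqI)
  qed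
qed

lemma swap_image_DP_v_eq_pad_image:
  assumes comp_t_clauses: "\<forall>B\<in>F. comp t \<in> B \<longrightarrow> C0 - {s, t} \<subseteq> B"
  shows "(\<lambda>E. swap ` E) ` DP v F = pad ` DP w F"
  using swap_image_DP_v_subset[OF comp_t_clauses] pad_image_DP_w_subset[OF comp_t_clauses] by (rule equalityI)

lemma pad_properties: "E \<subseteq> pad E" "pad E \<subseteq> E \<union> (C0 - {s, t})"
  by (auto simp: pad_def)

lemma ldeg_DP_w_s_ge_2:
  assumes comp_t_clauses: "\<forall>B\<in>F. comp t \<in> B \<longrightarrow> C0 - {s, t} \<subseteq> B" and ns: "nonsingular (DP v F)"
  shows "2 \<le> ldeg (DP w F) s"
proof -
  let ?G = "DP w F"
  have ns_pad: "nonsingular (pad ` ?G)"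
    using nonsingular_swap_image[OF lvar_s_neq_lvar_t ns] swap_image_DP_v_eq_pad_image[OF comp_t_clauses] by simp
  have "lvar s \<noteq> w" using lvar_s v_neq_w by simp
  have "0 < ldeg ?G s"
    using T.occurs_in_DP[OF S.C0_in_F S.s_in_C0 \<open>lvar s \<noteq> w\<close>] ldeg_pos_iff[OF T.finite_DP] by blast
  moreover obtain A where "A \<in> F" "comp s \<in> A"
    using MU_comp_occurs[OF MU S.C0_in_F S.s_in_C0] by blast
  then have "0 < ldeg ?G (comp s)"
    using T.occurs_in_DP[of A "comp s"] \<open>lvar s \<noteq> w\<close> ldeg_pos_iff[OF T.finite_DP] by auto
  ultimately have "0 < ldeg (pad ` ?G) s" "0 < ldeg (pad ` ?G) (comp s)"
    using ldeg_image_pos[OF T.finite_DP] pad_properties(1) by blast+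
  moreover have "\<not> singular (pad ` ?G) (lvar s)" using ns_pad by (simp add: nonsingular_def)
  ultimately have "2 \<le> ldeg (pad ` ?G) s"
    unfolding singular_lvar_iff by (auto simp: min_def split: if_splits)
  then show ?thesis using ldeg_image_le[OF T.finite_DP _, of pad "C0 - {s, t}" s] pad_properties by simp
qed

lemma nonsingular_DP_w:
  assumes comp_t_clauses: "\<forall>B\<in>F. comp t \<in> B \<longrightarrow> C0 - {s, t} \<subseteq> B" and ns: "nonsingular (DP v F)"
  shows "nonsingular (DP w F)"
proof -
  let ?G = "DP w F" and ?R = "C0 - {s, t}"
  have "ldeg ?G s \<le> ldeg ?G r" if "r \<in> ?R" for r
  proof -
    have "r \<in> E" if "E \<in> ?G" "s \<in> E" for E
      using twin_pivots.DP_v_clause_with_t_contains_C0[OF twin_pivots_swapped that] \<open>r \<in> ?R\<close> by blast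
    then show ?thesis unfolding ldeg_def by (intro card_mono) (use T.finite_DP in auto)
  qed
  then have R_deg: "\<forall>r\<in>?R. 2 \<le> ldeg ?G r" using ldeg_DP_w_s_ge_2[OF comp_t_clauses ns] by fastforce
  have pad: "\<forall>E\<in>?G. E \<subseteq> pad E \<and> pad E \<subseteq> E \<union> ?R" using pad_properties by blast
  have "nonsingular (pad ` ?G)"
    using nonsingular_swap_image[OF lvar_s_neq_lvar_t ns] swap_image_DP_v_eq_pad_image[OF comp_t_clauses] by simp
  then show ?thesis by (rule nonsingular_if_padding_nonsingular[OF T.finite_DP pad R_deg])
qed

lemma swap_image_DP_v_eq_DP_w:
  assumes comp_t_clauses: "\<forall>B\<in>F. comp t \<in> B \<longrightarrow> C0 - {s, t} \<subseteq> B"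
    and comp_s_clauses: "\<forall>A\<in>F. comp s \<in> A \<longrightarrow> C0 - {s, t} \<subseteq> A"
  shows "(\<lambda>E. swap ` E) ` DP v F = DP w F"
proof -
  have "pad E = E" if E: "E \<in> DP w F" for E
  proof (cases "comp s \<in> E")
    case True
    from E show ?thesis
    proof (cases rule: T.DP_cases)
      case 1
      then show ?thesis using comp_s_clauses True pad_eq[OF True] by blast
    next
      case (2 B)
      then have "comp s \<notin> E"
        unfolding mem_resolvent_iff using comp_t_clause_avoids_v S.comp_s_notin_C0 by simp
      then show ?thesis using True by contradiction
    qed
  qed (rule pad_eq_self)
  then have "pad ` DP w F = (\<lambda>E. E) ` DP w F" by (rule image_cong[OF HOL.refl])
  then show ?thesis using swap_image_DP_v_eq_pad_image[OF comp_t_clauses] by simp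
qed

end

section \<open>Clause-sets of singularity index one\<close>

lemma card_ge_2_obtains_other:
  assumes "2 \<le> card A"
  obtains w where "w \<in> A" "w \<noteq> v"
proof -
  have "\<not> A \<subseteq> {v}" using assms card_mono[of "{v}" A] by auto
  then show thesis using that by blast
qed

locale singind_one = singular_pivot +
  assumes nonsingular_DP: "nonsingular (DP v F)"
begin

lemma singular_v: "singular F v"
proof -
  have "ldeg F s = 1" by (simp add: ldeg_def occurrences_s)
  moreover obtain D where "D \<in> F" "comp s \<in> D" using MU_comp_occurs[OF MU C0_in_F s_in_C0] by blast
  then have "0 < ldeg F (comp s)" using ldeg_pos_iff[OF MU_finite[OF MU]] by blast
  ultimately show ?thesis using singular_lvar_iff[of F s] lvar_s by simp
qed

lemma DP_in_sDP: "DP v F \<in> sDP F"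
  unfolding sDP_def using sdp_reach.step[OF sdp_reach.refl singular_v] MU_DP nonsingular_DP by blast

lemma ldeg_1_lit_in_C0: "lvar x \<noteq> v \<Longrightarrow> ldeg F x = 1 \<Longrightarrow> x \<in> C0"
  using singular_DP_if_ldeg_1 nonsingular_DP by (auto simp: nonsingular_def)

lemma ldeg_comp_s_neq_1:
  assumes "singular F w" "w \<noteq> v"
  shows "ldeg F (comp s) \<noteq> 1"
proof
  assume "ldeg F (comp s) = 1"
  obtain x where "lvar x = w" "ldeg F x = 1" using singularE[OF assms(1)] .
  then show False
    using singular_DP_if_ldeg_1 \<open>ldeg F (comp s) = 1\<close> assms(2) nonsingular_DP
    by (auto simp: nonsingular_def)
qed

lemma non_one_singular:
  assumes "singular F w" "w \<noteq> v" and "singular F u"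
  shows "non_one_singular F u"
proof -
  have "\<not> one_singular F u"
  proof (cases "u = v")
    case True
    then show ?thesis
      using ldeg_comp_s_neq_1[OF assms(1,2)] one_singular_lvar_iff[of F s] lvar_s by simp
  next
    case False
    have "\<not> (Pos u \<in> C0 \<and> Neg u \<in> C0)" using MU_comp_notin[OF MU C0_in_F, of "Pos u"] by auto
    then show ?thesis
      using ldeg_1_lit_in_C0[of "Pos u"] ldeg_1_lit_in_C0[of "Neg u"] False
      by (auto simp: one_singular_def)
  qed
  with assms(3) show ?thesis by (simp add: non_one_singular_def)
qed

lemma singular_lit_in_C0:
  assumes "singular F w" "w \<noteq> v" and "singular_lit F x"
  shows "x \<in> C0"
proof -
  have "ldeg F x = 1" using assms(3) by (simp add: singular_lit_def)
  moreover have "x \<noteq> comp s" using calculation ldeg_comp_s_neq_1[OF assms(1,2)] by blast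
  ultimately show ?thesis
    using ldeg_1_lit_in_C0[of x] s_in_C0 lvar_eq_v_iff[of x] by (cases "lvar x = v") auto
qed

text \<open>Two further singular variables would have their singular literals in \<open>C0\<close>, and these
  would occur in exactly the same clauses of \<open>DP v F\<close>, namely the resolvents on \<open>s\<close>.\<close>
lemma other_singular_unique:
  assumes "eventually_saturated F"
    and "singular F u" "u \<noteq> v" and "singular F u'" "u' \<noteq> v"
  shows "u = u'"
proof (rule ccontr)
  assume "u \<noteq> u'"
  obtain b where b: "lvar b = u" "ldeg F b = 1" using singularE[OF assms(2)] .
  obtain c where c: "lvar c = u'" "ldeg F c = 1" using singularE[OF assms(4)] .
  have "b \<in> C0" "c \<in> C0" using ldeg_1_lit_in_C0 b c assms(3,5) by auto
  then have "{E\<in>DP v F. b \<in> E} = {E\<in>DP v F. c \<in> E}"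
    using occurrences_in_DP_of_C0_lit b c assms(3,5) by simp
  moreover have "saturated (DP v F)" using assms(1) DP_in_sDP by (simp add: eventually_saturated_def)
  moreover obtain E0 where "E0 \<in> DP v F" "b \<in> E0"
    using occurs_in_DP[OF C0_in_F \<open>b \<in> C0\<close>] b assms(3) by blast
  ultimately show False
    using saturated_distinct_occurrences b(1) c(1) \<open>u \<noteq> u'\<close> by blast
qed

lemma isomorphic_DP_other_singular:
  assumes sat: "eventually_saturated F" and w: "singular F w" "w \<noteq> v"
  shows "nonsingular (DP w F)" "isomorphic (DP v F) (DP w F)"
proof -
  obtain t where t: "lvar t = w" "ldeg F t = 1" using singularE[OF w(1)] .
  obtain C1 where C1: "{C\<in>F. t \<in> C} = {C1}" using t(2) by (rule ldeg_eq_1E)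
  moreover have "t \<in> C0" using ldeg_1_lit_in_C0 t w(2) by blast
  ultimately have "C1 = C0" using C0_in_F by blast
  interpret twin_pivots F s t C0 v w
    by unfold_locales (use MU occurrences_s C1 \<open>C1 = C0\<close> lvar_s t(1) w(2) in auto)
  have "saturated (DP v F)" using sat DP_in_sDP by (simp add: eventually_saturated_def)
  then have comp_t_clauses: "\<forall>B\<in>F. comp t \<in> B \<longrightarrow> C0 - {s, t} \<subseteq> B"
    using comp_t_clause_contains_C0 by blast
  show ns_w: "nonsingular (DP w F)" using nonsingular_DP_w[OF comp_t_clauses nonsingular_DP] .
  have "DP w F \<in> sDP F"
    unfolding sDP_def using sdp_reach.step[OF sdp_reach.refl w(1)] T.MU_DP ns_w by blast
  then have "saturated (DP w F)" using sat by (simp add: eventually_saturated_def)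
  then have comp_s_clauses: "\<forall>A\<in>F. comp s \<in> A \<longrightarrow> C0 - {s, t} \<subseteq> A"
    using twin_pivots.comp_t_clause_contains_C0[OF twin_pivots_swapped] by fastforce
  show "isomorphic (DP v F) (DP w F)"
    using isomorphic_swap_image[OF lvar_s_neq_lvar_t] swap_image_DP_v_eq_DP_w[OF comp_t_clauses comp_s_clauses] by metis
qed

lemma isomorphic_sDP:
  assumes sat: "eventually_saturated F" and "G \<in> sDP F" "H \<in> sDP F"
  shows "isomorphic G H"
proof (cases "\<exists>w. singular F w \<and> w \<noteq> v")
  case False
  then have "sDP F \<subseteq> {DP v F}"
    using sDP_subset_DP_image[OF singular_v, of "{v}"] nonsingular_DP by auto
  then show ?thesis using assms(2,3) isomorphic_refl by auto
next
  case True
  then obtain w where w: "singular F w" "w \<noteq> v" by blast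
  note iso = isomorphic_DP_other_singular[OF sat w]
  have "\<forall>u. singular F u \<longrightarrow> u \<in> {v, w}" using other_singular_unique[OF sat _ _ w] by blast
  then have "sDP F \<subseteq> {DP v F, DP w F}"
    using sDP_subset_DP_image[OF singular_v, of "{v, w}"] nonsingular_DP iso(1) by auto
  then show ?thesis
    using assms(2,3) iso(2) isomorphic_sym[OF iso(2)] isomorphic_refl by auto
qed

end

theorem corollary69:
  fixes F :: "'v cls"
  assumes "MU F" and "singind F = 1"
  shows "(card (singular_vars F) \<ge> 2 \<longrightarrow>
            (\<forall>v\<in>singular_vars F. non_one_singular F v)
          \<and> (\<exists>C\<in>F. \<forall>x. singular_lit F x \<longrightarrow> x \<in> C)
          \<and> (eventually_saturated F \<longrightarrow> card (singular_vars F) = 2))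
       \<and> (eventually_saturated F \<longrightarrow> (\<forall>G\<in>sDP F. \<forall>H\<in>sDP F. isomorphic G H))"
proof -
  obtain v where v: "singular F v" "nonsingular (DP v F)" using singind_eq_1E[OF assms] .
  obtain s where s: "lvar s = v" "ldeg F s = 1" using singularE[OF v(1)] .
  obtain C0 where C0: "{C\<in>F. s \<in> C} = {C0}" using s(2) by (rule ldeg_eq_1E)
  interpret singind_one F s C0 v
    by unfold_locales (fact assms(1) C0 s(1) v(2))+
  have "(\<forall>u\<in>singular_vars F. non_one_singular F u) \<and> (\<exists>C\<in>F. \<forall>x. singular_lit F x \<longrightarrow> x \<in> C)
      \<and> (eventually_saturated F \<longrightarrow> card (singular_vars F) = 2)"
    if two: "card (singular_vars F) \<ge> 2"
  proof -
    obtain w where w: "singular F w" "w \<noteq> v"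
      using card_ge_2_obtains_other[OF two, of v] by (auto simp: singular_vars_def)
    have "singular_vars F = {v, w}" if "eventually_saturated F"
      using other_singular_unique[OF that _ _ w] v(1) w(1) by (auto simp: singular_vars_def)
    then show ?thesis
      using non_one_singular[OF w] singular_lit_in_C0[OF w] C0_in_F w(2)
      by (auto simp: singular_vars_def)
  qed
  then show ?thesis using isomorphic_sDP by blast
qed

end
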